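(* The maps $\mathfrak{F}_{\pm}$ are diffeomorphisms.
   Context: On the De Sitter–Kerr spacetime (Boyer–Lindquist coordinates $(t,r,\theta,\phi)$, $r\in(r_-,r_+)$), fix $r_0\in(r_-,r_+)$ and let $T(r)=\int_{r_0}^r\frac{\lambda(a^2+r^2)}{\Delta_r}dr$, $A(r)=\int_{r_0}^r\frac{\lambda a}{\Delta_r}dr$ (increasing homeomorphisms $(r_-,r_+)\to\mathbb{R}$). ${}^*$Kerr coordinates: $({}^*t,r,\theta,{}^*\phi)=(t-T(r),r,\theta,\phi-A(r))$; Kerr${}^*$ coordinates: $(t^*,r,\theta,\phi^* )=(t+T(r),r,\theta,\phi+A(r))$. The future horizons are $\mathfrak{H}^{future}_+=\mathbb{R}_{{}^*t}\times\{r_+\}\times\mathbb{S}^2$ and $\mathfrak{H}^{future}_-=\mathbb{R}_{t^*}\times\{r_-\}\times\mathbb{S}^2$, and $\Sigma_0=\{t=0\}$. Define $\mathfrak{F}_+:\Sigma_0\to\mathfrak{H}^{future}_+$, $(0,r,\theta,\phi)\mapsto(-T(r),r_+,\theta,\phi-A(r))_{{}^*\mathrm{Kerr}}$ (mapping the intersection of an outgoing principal null geodesic with $\Sigma_0$ to its intersection with $\mathfrak{H}^{future}_+$), and $\mathfrak{F}_-:\Sigma_0\to\mathfrak{H}^{future}_-$ similarly (along incoming principal null geodesics, in Kerr${}^*$ coordinates). *)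

theory Defs
  imports "HOL-Analysis.Analysis"
begin

definition DeltaR :: "real \<Rightarrow> real \<Rightarrow> real \<Rightarrow> real \<Rightarrow> real" where
  "DeltaR M a Lam r = (r\<^sup>2 + a\<^sup>2) * (1 - Lam * r\<^sup>2 / 3) - 2 * M * r"

definition lam :: "real \<Rightarrow> real \<Rightarrow> real" where
  "lam a Lam = 1 + Lam * a\<^sup>2 / 3"

text \<open>T(r) = int_{r0}^r lambda (a^2+r^2)/Delta_r dr, A(r) = int_{r0}^r lambda a/Delta_r dr
  (oriented interval integrals).\<close>

definition Tfun :: "real \<Rightarrow> real \<Rightarrow> real \<Rightarrow> real \<Rightarrow> real \<Rightarrow> real" where
  "Tfun M a Lam r0 r = (LBINT s=ereal r0..ereal r. lam a Lam * (a\<^sup>2 + s\<^sup>2) / DeltaR M a Lam s)"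

definition Afun :: "real \<Rightarrow> real \<Rightarrow> real \<Rightarrow> real \<Rightarrow> real \<Rightarrow> real" where
  "Afun M a Lam r0 r = (LBINT s=ereal r0..ereal r. lam a Lam * a / DeltaR M a Lam s)"

text \<open>S^2 is realised as the unit sphere in R^3, with the Boyer--Lindquist angles
  (theta, phi) as spherical coordinates about the third axis; the map phi |-> phi + alpha
  is the rotation by alpha about that axis.\<close>

definition rotz :: "real \<Rightarrow> real^3 \<Rightarrow> real^3" where
  "rotz \<alpha> x = vector [cos \<alpha> * x$1 - sin \<alpha> * x$2, sin \<alpha> * x$1 + cos \<alpha> * x$2, x$3]"

abbreviation S2 :: "(real^3) set" where
  "S2 \<equiv> sphere 0 1"

fun Ck_on :: "nat \<Rightarrow> 'a::euclidean_space set \<Rightarrow> ('a \<Rightarrow> 'b::euclidean_space) \<Rightarrow> bool" where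
  "Ck_on 0 U f = continuous_on U f"
| "Ck_on (Suc k) U f = (f differentiable_on U \<and>
      (\<forall>i\<in>Basis. Ck_on k U (\<lambda>x. frechet_derivative f (at x) i)))"

definition smooth_on :: "'a::euclidean_space set \<Rightarrow> ('a \<Rightarrow> 'b::euclidean_space) \<Rightarrow> bool" where
  "smooth_on U f \<longleftrightarrow> open U \<and> (\<forall>k. Ck_on k U f)"

definition smooth_map_on :: "'a::euclidean_space set \<Rightarrow> ('a \<Rightarrow> 'b::euclidean_space) \<Rightarrow> bool" where
  "smooth_map_on X f \<longleftrightarrow>
     (\<forall>x\<in>X. \<exists>U g. open U \<and> x \<in> U \<and> smooth_on U g \<and> (\<forall>y\<in>X \<inter> U. g y = f y))"

definition diffeomorphism_betw :: "'a::euclidean_space set \<Rightarrow> 'b::euclidean_space set \<Rightarrow> ('a \<Rightarrow> 'b) \<Rightarrow> bool" where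
  "diffeomorphism_betw X Y f \<longleftrightarrow>
     bij_betw f X Y \<and> smooth_map_on X f \<and> smooth_map_on Y (inv_into X f)"

text \<open>Sigma_0 = {t = 0}, parametrised by (r, omega) with r in (r_-, r_+) and omega in S^2.
  H_+^future = R_{*t} x {r_+} x S^2 parametrised by (*t, omega) in *Kerr coordinates;
  H_-^future = R_{t*} x {r_-} x S^2 parametrised by (t*, omega) in Kerr* coordinates.\<close>

definition Sigma0 :: "real \<Rightarrow> real \<Rightarrow> (real \<times> (real^3)) set" where
  "Sigma0 rm rp = {rm<..<rp} \<times> S2"

definition Horizon :: "(real \<times> (real^3)) set" where
  "Horizon = UNIV \<times> S2"

definition Fplus :: "real \<Rightarrow> real \<Rightarrow> real \<Rightarrow> real \<Rightarrow> real \<times> (real^3) \<Rightarrow> real \<times> (real^3)" where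
  "Fplus M a Lam r0 p = (- Tfun M a Lam r0 (fst p), rotz (- Afun M a Lam r0 (fst p)) (snd p))"

definition Fminus :: "real \<Rightarrow> real \<Rightarrow> real \<Rightarrow> real \<Rightarrow> real \<times> (real^3) \<Rightarrow> real \<times> (real^3)" where
  "Fminus M a Lam r0 p = (Tfun M a Lam r0 (fst p), rotz (Afun M a Lam r0 (fst p)) (snd p))"

end

theory Submission
  imports Defs
begin

text \<open>
  T is a strictly increasing bijection from (r_-, r_+) onto the real line: its integrand
  lambda (a^2 + r^2) / Delta_r is positive, and since Delta_r vanishes at both horizons and is
  Lipschitz, the integrand is at least K / (distance to the nearest horizon), so T diverges
  logarithmically at both ends. In the coordinates (r, omega) on Sigma_0 and (t, omega) on the
  horizon, F_+ and F_- are the maps (r, omega) |-> (sigma T(r), R(sigma A(r)) omega) with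
  sigma = -1 and sigma = 1, where R is the rotation about the third axis. Such a map is affine in omega with coefficients smooth
  in r; the same holds for its inverse (t, omega) |-> (tau(t), R(-sigma A(tau t)) omega), where
  tau is the inverse of sigma T, smooth because it solves tau' = 1 / (sigma T') o tau.
  Smoothness of maps affine along the fibres follows by induction on the order of
  differentiability, since their partial derivatives are again affine along the fibres.
\<close>

section \<open>Higher differentiability\<close>

lemma Ck_on_Suc_imp_Ck_on: "Ck_on (Suc k) U f \<Longrightarrow> Ck_on k U f"
proof (induction k arbitrary: f)
  case 0
  then show ?case by (simp add: differentiable_imp_continuous_on)
next
  case (Suc k)
  then show ?case by (metis Ck_on.simps(2))
qed

lemma Ck_on_SucD:
  assumes "open U" and "Ck_on (Suc k) U f" and "x \<in> U"
  shows "(f has_derivative frechet_derivative f (at x)) (at x)"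
  using assms by (simp add: differentiable_on_eq_differentiable_at frechet_derivative_works)

lemma Ck_on_cong:
  assumes "open U" and "\<And>x. x \<in> U \<Longrightarrow> f x = g x" and "Ck_on k U f"
  shows "Ck_on k U g"
  using assms(2,3)
proof (induction k arbitrary: f g)
  case 0
  then show ?case using continuous_on_cong by force
next
  case (Suc k)
  have deriv: "(g has_derivative frechet_derivative f (at x)) (at x)" if x: "x \<in> U" for x
    by (rule has_derivative_transform_within_open[OF Ck_on_SucD[OF \<open>open U\<close> Suc.prems(2) x]
          \<open>open U\<close> x]) (use Suc.prems(1) in auto)
  then have "g differentiable_on U"
    using \<open>open U\<close> by (auto simp: differentiable_on_eq_differentiable_at differentiable_def)
  moreover have "Ck_on k U (\<lambda>x. frechet_derivative g (at x) i)" if "i \<in> Basis" for i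
  proof (rule Suc.IH)
    show "Ck_on k U (\<lambda>x. frechet_derivative f (at x) i)"
      using Suc.prems(2) that by simp
    show "frechet_derivative f (at x) i = frechet_derivative g (at x) i" if "x \<in> U" for x
      using frechet_derivative_at[OF deriv[OF that]] by simp
  qed
  ultimately show ?case by simp
qed

lemma Ck_on_SucI:
  assumes "open U" and "\<And>x. x \<in> U \<Longrightarrow> (f has_derivative D x) (at x)"
    and "\<And>i. i \<in> Basis \<Longrightarrow> Ck_on k U (\<lambda>x. D x i)"
  shows "Ck_on (Suc k) U f"
proof -
  have "f differentiable_on U"
    using assms(1,2) by (auto simp: differentiable_on_eq_differentiable_at differentiable_def)
  moreover have "Ck_on k U (\<lambda>x. frechet_derivative f (at x) i)" if "i \<in> Basis" for i
  proof (rule Ck_on_cong[OF \<open>open U\<close> _ assms(3)[OF that]])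
    show "D x i = frechet_derivative f (at x) i" if "x \<in> U" for x
      using frechet_derivative_at[OF assms(2)[OF that]] by simp
  qed
  ultimately show ?thesis by simp
qed

lemma Ck_on_const: "Ck_on k U (\<lambda>x. c)"
  by (induction k arbitrary: c) auto

lemma Ck_on_add:
  assumes "open U" and "Ck_on k U f" and "Ck_on k U g"
  shows "Ck_on k U (\<lambda>x. f x + g x)"
  using assms(2,3)
proof (induction k arbitrary: f g)
  case 0
  then show ?case by (auto intro: continuous_on_add)
next
  case (Suc k)
  have deriv: "((\<lambda>x. f x + g x) has_derivative
      (\<lambda>h. frechet_derivative f (at x) h + frechet_derivative g (at x) h)) (at x)"
    if x: "x \<in> U" for x
    using has_derivative_add[OF Ck_on_SucD[OF \<open>open U\<close> Suc.prems(1) x]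
        Ck_on_SucD[OF \<open>open U\<close> Suc.prems(2) x]] .
  have partials: "Ck_on k U (\<lambda>x. frechet_derivative f (at x) i + frechet_derivative g (at x) i)"
    if "i \<in> Basis" for i
    using Suc.IH Suc.prems that by simp
  show ?case
    using deriv partials by (rule Ck_on_SucI[OF \<open>open U\<close>])
qed

lemma Ck_on_bounded_linear_compose:
  assumes "open U" and "bounded_linear L" and "Ck_on k U f"
  shows "Ck_on k U (\<lambda>x. L (f x))"
  using assms(3)
proof (induction k arbitrary: f)
  case 0
  then show ?case
    using linear_continuous_on[OF assms(2)] continuous_on_compose[of U f L] by (auto simp: o_def)
next
  case (Suc k)
  have deriv: "((\<lambda>x. L (f x)) has_derivative (\<lambda>h. L (frechet_derivative f (at x) h))) (at x)"
    if x: "x \<in> U" for x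
    using bounded_linear.has_derivative[OF assms(2) Ck_on_SucD[OF \<open>open U\<close> Suc.prems x]] .
  have partials: "Ck_on k U (\<lambda>x. L (frechet_derivative f (at x) i))" if "i \<in> Basis" for i
    using Suc.IH Suc.prems that by simp
  show ?case
    using deriv partials by (rule Ck_on_SucI[OF \<open>open U\<close>])
qed

lemma Ck_on_minus:
  assumes "open U" and "Ck_on k U f"
  shows "Ck_on k U (\<lambda>x. - f x)"
  using Ck_on_bounded_linear_compose[OF assms(1) bounded_linear_minus[OF bounded_linear_ident] assms(2)] .

lemma Ck_on_mult:
  fixes f g :: "'a::euclidean_space \<Rightarrow> real"
  assumes "open U" and "Ck_on k U f" and "Ck_on k U g"
  shows "Ck_on k U (\<lambda>x. f x * g x)"
  using assms(2,3)
proof (induction k arbitrary: f g)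
  case 0
  then show ?case by (auto intro: continuous_on_mult)
next
  case (Suc k)
  have "Ck_on k U f" and "Ck_on k U g"
    using Suc.prems by (auto intro: Ck_on_Suc_imp_Ck_on)
  then have partials:
    "Ck_on k U (\<lambda>x. f x * frechet_derivative g (at x) i + frechet_derivative f (at x) i * g x)"
    if "i \<in> Basis" for i
    using Suc.IH Suc.prems that by (simp add: Ck_on_add[OF \<open>open U\<close>])
  have deriv: "((\<lambda>x. f x * g x) has_derivative
      (\<lambda>h. f x * frechet_derivative g (at x) h + frechet_derivative f (at x) h * g x)) (at x)"
    if x: "x \<in> U" for x
    using has_derivative_mult[OF Ck_on_SucD[OF \<open>open U\<close> Suc.prems(1) x]
        Ck_on_SucD[OF \<open>open U\<close> Suc.prems(2) x]] .
  show ?case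
    using deriv partials by (rule Ck_on_SucI[OF \<open>open U\<close>])
qed

lemma Ck_on_inverse:
  fixes f :: "'a::euclidean_space \<Rightarrow> real"
  assumes "open U" and "Ck_on k U f" and "\<And>x. x \<in> U \<Longrightarrow> f x \<noteq> 0"
  shows "Ck_on k U (\<lambda>x. inverse (f x))"
  using assms(2)
proof (induction k)
  case 0
  then show ?case using assms(3) by (simp add: continuous_on_inverse)
next
  case (Suc k)
  have inverse_Ck: "Ck_on k U (\<lambda>x. inverse (f x))"
    using Suc.IH[OF Ck_on_Suc_imp_Ck_on[OF Suc.prems]] .
  have inverse_deriv: "((\<lambda>x. inverse (f x)) has_derivative
      (\<lambda>h. - (inverse (f x) * frechet_derivative f (at x) h * inverse (f x)))) (at x)"
    if x: "x \<in> U" for x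
    using Deriv.has_derivative_inverse[OF assms(3)[OF x] Ck_on_SucD[OF \<open>open U\<close> Suc.prems x]] .
  have partials: "Ck_on k U (\<lambda>x. - (inverse (f x) * frechet_derivative f (at x) i * inverse (f x)))"
    if "i \<in> Basis" for i
  proof -
    have "Ck_on k U (\<lambda>x. frechet_derivative f (at x) i)"
      using Suc.prems that by simp
    then show ?thesis
      using inverse_Ck by (intro Ck_on_minus Ck_on_mult \<open>open U\<close>)
  qed
  show ?case
    by (rule Ck_on_SucI[OF \<open>open U\<close> inverse_deriv partials])
qed

lemma Ck_on_ident: "Ck_on k U (\<lambda>x. x)"
  by (induction k) (auto simp: Ck_on_const continuous_on_id)

lemma Ck_on_diff:
  assumes "open U" and "Ck_on k U f" and "Ck_on k U g"
  shows "Ck_on k U (\<lambda>x. f x - g x)"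
  using Ck_on_add[OF assms(1,2) Ck_on_minus[OF assms(1,3)]] by simp

lemma smooth_on_imp_continuous_on: "smooth_on U f \<Longrightarrow> continuous_on U f"
proof -
  assume "smooth_on U f"
  then have "Ck_on 0 U f"
    unfolding smooth_on_def by blast
  then show ?thesis
    by simp
qed

lemma smooth_on_const: "open U \<Longrightarrow> smooth_on U (\<lambda>x. c)"
  by (simp add: smooth_on_def Ck_on_const)

lemma smooth_map_onI:
  assumes "open U" and "X \<subseteq> U" and "smooth_on U g" and "\<And>x. x \<in> X \<Longrightarrow> g x = f x"
  shows "smooth_map_on X f"
  using assms unfolding smooth_map_on_def by blast

lemma Ck_on_Suc_real_domain:
  fixes f :: "real \<Rightarrow> 'b::euclidean_space"
  assumes "open I" and "\<And>x. x \<in> I \<Longrightarrow> (f has_vector_derivative f' x) (at x)"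
  shows "Ck_on (Suc k) I f \<longleftrightarrow> Ck_on k I f'"
proof -
  have fd: "frechet_derivative f (at x) 1 = f' x" if "x \<in> I" for x
    using frechet_derivative_at[OF assms(2)[OF that, unfolded has_vector_derivative_def]]
    by (metis scaleR_one)
  have "f differentiable_on I"
    using assms by (auto simp: differentiable_on_eq_differentiable_at has_vector_derivative_def differentiable_def)
  moreover have "Ck_on k I (\<lambda>x. frechet_derivative f (at x) 1) \<longleftrightarrow> Ck_on k I f'"
    using Ck_on_cong[OF \<open>open I\<close>, of "\<lambda>x. frechet_derivative f (at x) 1" f' k]
      Ck_on_cong[OF \<open>open I\<close>, of f' "\<lambda>x. frechet_derivative f (at x) 1" k] fd
    by auto
  ultimately show ?thesis
    by (simp add: Basis_real_def)
qed

lemma Ck_on_Suc_real: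
  fixes f :: "real \<Rightarrow> real"
  assumes "open I" and "\<And>x. x \<in> I \<Longrightarrow> (f has_real_derivative f' x) (at x)"
  shows "Ck_on (Suc k) I f \<longleftrightarrow> Ck_on k I f'"
  using assms(1) by (rule Ck_on_Suc_real_domain)
    (use assms(2) in \<open>simp add: has_real_derivative_iff_has_vector_derivative\<close>)

lemma smooth_on_vector_derivative:
  fixes f :: "real \<Rightarrow> 'b::euclidean_space"
  assumes "smooth_on I f"
  shows "smooth_on I (\<lambda>x. vector_derivative f (at x))"
    and "x \<in> I \<Longrightarrow> (f has_vector_derivative vector_derivative f (at x)) (at x)"
proof -
  have "open I" and "Ck_on (Suc 0) I f"
    using assms by (auto simp: smooth_on_def)
  then have deriv: "(f has_vector_derivative vector_derivative f (at x)) (at x)" if "x \<in> I" for x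
    using that by (simp add: differentiable_on_eq_differentiable_at vector_derivative_works[symmetric])
  then show "x \<in> I \<Longrightarrow> (f has_vector_derivative vector_derivative f (at x)) (at x)" .
  show "smooth_on I (\<lambda>x. vector_derivative f (at x))"
    using assms Ck_on_Suc_real_domain[OF \<open>open I\<close> deriv] by (simp add: smooth_on_def)
qed

lemma Ck_on_compose_real:
  fixes g :: "real \<Rightarrow> real" and h :: "'a::euclidean_space \<Rightarrow> real"
  assumes "open U" and "open J" and "h ` U \<subseteq> J" and "Ck_on k J g" and "Ck_on k U h"
  shows "Ck_on k U (\<lambda>x. g (h x))"
  using assms(4,5)
proof (induction k arbitrary: g)
  case 0
  then show ?case using continuous_on_compose2[of J g U h] assms(3) by simp
next
  case (Suc k)
  define g' where "g' y = vector_derivative g (at y)" for y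
  have g_deriv: "(g has_vector_derivative g' y) (at y)" if "y \<in> J" for y
    using Suc.prems(1) that \<open>open J\<close>
    by (simp add: g'_def differentiable_on_eq_differentiable_at vector_derivative_works[symmetric])
  have "Ck_on k J g'"
    using Suc.prems(1) Ck_on_Suc_real_domain[OF \<open>open J\<close> g_deriv] by simp
  moreover have "Ck_on k U h"
    using Suc.prems(2) by (rule Ck_on_Suc_imp_Ck_on)
  ultimately have "Ck_on k U (\<lambda>x. g' (h x))"
    by (rule Suc.IH)
  then have partials: "Ck_on k U (\<lambda>x. frechet_derivative h (at x) i * g' (h x))" if "i \<in> Basis" for i
    using Suc.prems(2) that by (simp add: Ck_on_mult[OF \<open>open U\<close>])
  have deriv: "((\<lambda>x. g (h x)) has_derivative (\<lambda>t. frechet_derivative h (at x) t * g' (h x))) (at x)"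
    if x: "x \<in> U" for x
  proof -
    have "(g has_derivative (\<lambda>t. t * g' (h x))) (at (h x))"
      using g_deriv[of "h x"] x assms(3) by (auto simp: has_vector_derivative_def)
    from diff_chain_at[OF Ck_on_SucD[OF \<open>open U\<close> Suc.prems(2) x] this]
    show ?thesis by (simp add: o_def)
  qed
  show ?case
    using deriv partials by (rule Ck_on_SucI[OF \<open>open U\<close>])
qed

lemma Ck_on_sin_cos: "Ck_on k (UNIV :: real set) sin \<and> Ck_on k (UNIV :: real set) cos"
proof (induction k)
  case 0
  have "continuous_on UNIV (\<lambda>x::real. sin x)" and "continuous_on UNIV (\<lambda>x::real. cos x)"
    by (intro continuous_intros)+
  then show ?case by simp
next
  case (Suc k)
  have "Ck_on k UNIV (\<lambda>x::real. - sin x)"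
    using Suc.IH Ck_on_minus[OF open_UNIV, of k "sin :: real \<Rightarrow> real"] by simp
  then show ?case
    using Suc.IH Ck_on_Suc_real[of UNIV sin cos k] Ck_on_Suc_real[of UNIV cos "\<lambda>x. - sin x" k]
    by (simp add: DERIV_sin DERIV_cos)
qed

lemma Ck_on_autonomous_ode_solution:
  fixes h g :: "real \<Rightarrow> real"
  assumes "open I" and "open J" and "h ` I \<subseteq> J" and "\<And>k. Ck_on k J g"
    and "\<And>x. x \<in> I \<Longrightarrow> (h has_real_derivative g (h x)) (at x)"
  shows "Ck_on k I h"
proof (induction k)
  case 0
  show ?case
    using assms(5) by (auto intro!: continuous_at_imp_continuous_on DERIV_isCont)
next
  case (Suc k)
  have "Ck_on k I (\<lambda>x. g (h x))"
    using Ck_on_compose_real[OF assms(1-3) assms(4) Suc.IH] .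
  then show ?case
    using Ck_on_Suc_real[OF \<open>open I\<close> assms(5)] by simp
qed

lemma smooth_on_inv_into:
  fixes f f' :: "real \<Rightarrow> real"
  assumes "open I" and "open J" and "f ` I = J" and "inj_on f I"
    and "\<And>x. x \<in> I \<Longrightarrow> (f has_real_derivative f' x) (at x)"
    and "\<And>x. x \<in> I \<Longrightarrow> f' x \<noteq> 0" and "smooth_on I f'"
  shows "smooth_on J (inv_into I f)"
proof -
  let ?g = "inv_into I f"
  have g_mem: "?g y \<in> I" and f_g: "f (?g y) = y" if "y \<in> J" for y
    using that assms(3) by (auto intro: inv_into_into f_inv_into_f)
  have g_cont: "isCont ?g y" if y: "y \<in> J" for y
  proof -
    obtain d where "d > 0" and d: "cball (?g y) d \<subseteq> I"
      using \<open>open I\<close> g_mem[OF y] open_contains_cball by blast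
    then have near: "z \<in> I" if "\<bar>z - ?g y\<bar> \<le> d" for z
      using that by (auto simp: subset_eq dist_real_def abs_minus_commute)
    have "isCont ?g (f (?g y))"
    proof (rule isCont_inverse_function[where f=f and g="?g" and x="?g y", OF \<open>d > 0\<close>])
      show "?g (f z) = z" if "\<bar>z - ?g y\<bar> \<le> d" for z
        using inv_into_f_f[OF assms(4) near[OF that]] .
      show "isCont f z" if "\<bar>z - ?g y\<bar> \<le> d" for z
        using DERIV_isCont[OF assms(5)[OF near[OF that]]] .
    qed
    then show ?thesis using f_g[OF y] by simp
  qed
  have g_deriv: "(?g has_real_derivative inverse (f' (?g y))) (at y)" if y: "y \<in> J" for y
  proof -
    obtain e where "e > 0" and e: "ball y e \<subseteq> J"
      using \<open>open J\<close> y open_contains_ball by blast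
    show ?thesis
    proof (rule DERIV_inverse_function[where g="?g" and x=y,
          OF assms(5)[OF g_mem[OF y]] assms(6)[OF g_mem[OF y]]])
      show "y - e < y" and "y < y + e" using \<open>e > 0\<close> by auto
      show "f (?g z) = z" if "y - e < z" "z < y + e" for z
        using f_g e that by (auto simp: subset_eq dist_real_def)
      show "isCont ?g y" using g_cont[OF y] .
    qed
  qed
  have "Ck_on k I (\<lambda>x. inverse (f' x))" for k
    using assms(7) by (intro Ck_on_inverse[OF \<open>open I\<close> _ assms(6)]) (simp add: smooth_on_def)
  \<comment> \<open>The inverse solves the autonomous equation g' = (1 / f') o g.\<close>
  then have "Ck_on k J ?g" for k
    using g_mem g_deriv by (intro Ck_on_autonomous_ode_solution[OF \<open>open J\<close> \<open>open I\<close>]) auto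
  then show ?thesis
    using \<open>open J\<close> by (simp add: smooth_on_def)
qed

lemma smooth_on_primitive:
  fixes f f' :: "real \<Rightarrow> real"
  assumes "open I" and "\<And>x. x \<in> I \<Longrightarrow> (f has_real_derivative f' x) (at x)" and "smooth_on I f'"
  shows "smooth_on I f"
proof -
  have "Ck_on k I f" for k
  proof (cases k)
    case 0
    then show ?thesis
      using assms(2) by (auto intro!: continuous_at_imp_continuous_on DERIV_isCont)
  next
    case (Suc k')
    then show ?thesis
      using Ck_on_Suc_real[OF assms(1,2)] assms(3) by (simp add: smooth_on_def)
  qed
  then show ?thesis
    using assms(1) by (simp add: smooth_on_def)
qed

section \<open>Maps affine along the fibres of a product\<close>

definition fibre_affine :: "(real \<Rightarrow> real) \<Rightarrow> (real \<Rightarrow> real^'m) \<Rightarrow> (real \<Rightarrow> real^'n^'m)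
    \<Rightarrow> real \<times> (real^'n) \<Rightarrow> real \<times> (real^'m)"
  where "fibre_affine \<alpha> \<beta> \<Gamma> p = (\<alpha> (fst p), \<beta> (fst p) + \<Gamma> (fst p) *v snd p)"

lemma bounded_bilinear_matrix_vector_mult:
  "bounded_bilinear ((*v) :: real^'n^'m \<Rightarrow> real^'n \<Rightarrow> real^'m)"
proof -
  have "linear (\<lambda>A :: real^'n^'m. A *v x)" for x :: "real^'n"
    by (rule linearI)
      (simp_all add: vec_eq_iff matrix_vector_mult_def sum.distrib sum_distrib_left algebra_simps)
  then show ?thesis
    by (simp add: bilinear_conv_bounded_bilinear[symmetric] bilinear_def)
qed

lemma has_derivative_fibre_affine:
  assumes "(\<alpha> has_real_derivative \<alpha>') (at r)" and "(\<beta> has_vector_derivative \<beta>') (at r)"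
    and "(\<Gamma> has_vector_derivative \<Gamma>') (at r)"
  shows "(fibre_affine \<alpha> \<beta> \<Gamma> has_derivative
      (\<lambda>d. (fst d * \<alpha>', fst d *\<^sub>R \<beta>' + (\<Gamma> r *v snd d + (fst d *\<^sub>R \<Gamma>') *v \<omega>))))
      (at (r, \<omega>))"
proof -
  have along_fst: "((\<lambda>p. f (fst p)) has_derivative (\<lambda>d. fst d *\<^sub>R f')) (at (r, \<omega>))"
    if "(f has_vector_derivative f') (at r)" for f :: "real \<Rightarrow> 'c::real_normed_vector" and f'
  proof -
    have "(f has_derivative (\<lambda>h. h *\<^sub>R f')) (at (fst (r, \<omega>)))"
      using that by (simp add: has_vector_derivative_def)
    from has_derivative_compose[OF has_derivative_fst[OF has_derivative_ident] this]
    show ?thesis .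
  qed
  have "((\<lambda>p. \<Gamma> (fst p) *v snd p) has_derivative
      (\<lambda>d. \<Gamma> r *v snd d + (fst d *\<^sub>R \<Gamma>') *v \<omega>)) (at (r, \<omega>))"
    using bounded_bilinear.FDERIV[OF bounded_bilinear_matrix_vector_mult along_fst[OF assms(3)]
        has_derivative_snd[OF has_derivative_ident]]
    by simp
  moreover have "((\<lambda>p. \<alpha> (fst p)) has_derivative (\<lambda>d. fst d * \<alpha>')) (at (r, \<omega>))"
    using along_fst[of \<alpha> \<alpha>'] assms(1) by (simp add: has_real_derivative_iff_has_vector_derivative)
  ultimately show ?thesis
    unfolding fibre_affine_def[abs_def]
    by (intro has_derivative_Pair has_derivative_add along_fst assms(2))
qed

lemma has_derivative_fibre_affine_smooth:
  assumes "smooth_on I \<alpha>" and "smooth_on I \<beta>" and "smooth_on I \<Gamma>" and "r \<in> I"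
  shows "(fibre_affine \<alpha> \<beta> \<Gamma> has_derivative
      (\<lambda>d. (fst d * vector_derivative \<alpha> (at r),
        fst d *\<^sub>R vector_derivative \<beta> (at r)
          + (\<Gamma> r *v snd d + (fst d *\<^sub>R vector_derivative \<Gamma> (at r)) *v \<omega>))))
      (at (r, \<omega>))"
  using smooth_on_vector_derivative(2)[OF assms(1,4)] smooth_on_vector_derivative(2)[OF assms(2,4)]
    smooth_on_vector_derivative(2)[OF assms(3,4)]
  by (intro has_derivative_fibre_affine) (simp_all add: has_real_derivative_iff_has_vector_derivative)

text \<open>
  The partial derivatives of a fibrewise affine map are again fibrewise affine: along r with the
  derivatives of the coefficients, along the j-th fibre coordinate with the j-th column of the
  linear part as translation part.
\<close>

lemma smooth_on_fibre_affine:
  fixes \<alpha> :: "real \<Rightarrow> real" and \<beta> :: "real \<Rightarrow> real^'m" and \<Gamma> :: "real \<Rightarrow> real^'n^'m"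
  assumes "open I" and "smooth_on I \<alpha>" and "smooth_on I \<beta>" and "smooth_on I \<Gamma>"
  shows "smooth_on (I \<times> UNIV) (fibre_affine \<alpha> \<beta> \<Gamma>)"
proof -
  have U: "open (I \<times> (UNIV :: (real^'n) set))"
    using \<open>open I\<close> by (simp add: open_Times)
  have "Ck_on k (I \<times> UNIV) (fibre_affine \<alpha> \<beta> \<Gamma>)"
    if "smooth_on I \<alpha>" "smooth_on I \<beta>" "smooth_on I \<Gamma>"
    for k and \<alpha> :: "real \<Rightarrow> real" and \<beta> :: "real \<Rightarrow> real^'m" and \<Gamma> :: "real \<Rightarrow> real^'n^'m"
    using that
  proof (induction k arbitrary: \<alpha> \<beta> \<Gamma>)
    case 0
    then have "fibre_affine \<alpha> \<beta> \<Gamma> differentiable at p" if "p \<in> I \<times> UNIV" for p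
      using has_derivative_fibre_affine_smooth[of I \<alpha> \<beta> \<Gamma> "fst p" "snd p"] that
      by (auto simp: differentiable_def)
    then show ?case
      by (auto simp: continuous_on_eq_continuous_at[OF U] intro!: differentiable_imp_continuous_within)
  next
    case (Suc k)
    define \<alpha>' where "\<alpha>' r = vector_derivative \<alpha> (at r)" for r
    define \<beta>' where "\<beta>' r = vector_derivative \<beta> (at r)" for r
    define \<Gamma>' where "\<Gamma>' r = vector_derivative \<Gamma> (at r)" for r
    define D where "D p = (\<lambda>d. (fst d * \<alpha>' (fst p),
      fst d *\<^sub>R \<beta>' (fst p) + (\<Gamma> (fst p) *v snd d + (fst d *\<^sub>R \<Gamma>' (fst p)) *v snd p)))" for p
    have deriv: "(fibre_affine \<alpha> \<beta> \<Gamma> has_derivative D p) (at p)" if "p \<in> I \<times> UNIV" for p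
      using has_derivative_fibre_affine_smooth[OF Suc.prems, of "fst p" "snd p"] that
      by (auto simp: D_def \<alpha>'_def \<beta>'_def \<Gamma>'_def)
    have "Ck_on k (I \<times> UNIV) (\<lambda>p. D p i)" if "i \<in> Basis" for i
    proof -
      from that consider "i = (1, 0)" | j where "i = (0, axis j 1)"
        by (auto simp: Basis_prod_def Basis_vec_def)
      then show ?thesis
      proof cases
        case 1
        then have "(\<lambda>p. D p i) = fibre_affine \<alpha>' \<beta>' \<Gamma>'"
          by (auto simp: D_def fibre_affine_def)
        moreover have "smooth_on I \<alpha>'" "smooth_on I \<beta>'" "smooth_on I \<Gamma>'"
          unfolding \<alpha>'_def \<beta>'_def \<Gamma>'_def using Suc.prems by (auto intro: smooth_on_vector_derivative(1))
        ultimately show ?thesis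
          using Suc.IH by simp
      next
        case (2 j)
        then have "(\<lambda>p. D p i) = fibre_affine (\<lambda>r. 0) (\<lambda>r. \<Gamma> r *v axis j 1) (\<lambda>r. 0)"
          by (auto simp: D_def fibre_affine_def)
        moreover have "bounded_linear (\<lambda>A :: real^'n^'m. A *v axis j 1)"
          by (rule bounded_bilinear.bounded_linear_left[OF bounded_bilinear_matrix_vector_mult])
        from Ck_on_bounded_linear_compose[OF \<open>open I\<close> this]
        have "smooth_on I (\<lambda>r. \<Gamma> r *v axis j 1)"
          using Suc.prems(3) by (simp add: smooth_on_def)
        ultimately show ?thesis
          using Suc.IH \<open>open I\<close> by (simp add: smooth_on_const)
      qed
    qed
    with deriv show ?case
      by (rule Ck_on_SucI[OF U])
  qed
  then show ?thesis
    using assms U by (simp add: smooth_on_def)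
qed

section \<open>Rotations about the third axis\<close>

definition rotz_matrix :: "real \<Rightarrow> real^3^3" where
  "rotz_matrix \<theta> = vector [vector [cos \<theta>, - sin \<theta>, 0], vector [sin \<theta>, cos \<theta>, 0], vector [0, 0, 1]]"

lemma rotz_eq_matrix_vector_mult: "rotz \<theta> x = rotz_matrix \<theta> *v x"
  by (simp add: rotz_def rotz_matrix_def vec_eq_iff forall_3 matrix_vector_mult_def sum_3)

lemma cos_sin_cancel: "cos \<theta> * (cos \<theta> * y) + sin \<theta> * (sin \<theta> * y) = (y::real)"
  by (metis mult.assoc distrib_right mult_1 sin_cos_squared_add3)

lemma rotz_rotz_minus: "rotz \<theta> (rotz (- \<theta>) x) = x"
  unfolding rotz_def by (simp add: vec_eq_iff forall_3 algebra_simps cos_sin_cancel)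

lemma rotz_minus_rotz: "rotz (- \<theta>) (rotz \<theta> x) = x"
  using rotz_rotz_minus[of "- \<theta>" x] by simp

lemma norm_rotz [simp]: "norm (rotz \<theta> x) = norm x"
proof -
  have "inner (rotz \<theta> x) (rotz \<theta> x) = inner x x"
    using cos_sin_cancel[of \<theta> "x $ 1 * x $ 1"] cos_sin_cancel[of \<theta> "x $ 2 * x $ 2"]
    unfolding rotz_def inner_vec_def by (simp add: sum_3 algebra_simps)
  then show ?thesis
    by (simp add: norm_eq_sqrt_inner)
qed

lemma smooth_on_rotz_matrix:
  assumes "smooth_on I \<theta>"
  shows "smooth_on I (\<lambda>r. rotz_matrix (\<theta> r))"
proof -
  define C S E :: "real^3^3" where
    "C = vector [vector [1, 0, 0], vector [0, 1, 0], 0]"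
    and "S = vector [vector [0, -1, 0], vector [1, 0, 0], 0]"
    and "E = vector [0, 0, vector [0, 0, 1]]"
  have decomp: "rotz_matrix s = cos s *\<^sub>R C + sin s *\<^sub>R S + E" for s
    by (simp add: rotz_matrix_def C_def S_def E_def vec_eq_iff forall_3)
  have "open I" and \<theta>: "Ck_on k I \<theta>" for k
    using assms by (auto simp: smooth_on_def)
  have "Ck_on k I (\<lambda>r. f (\<theta> r))" if "Ck_on k UNIV f" for f :: "real \<Rightarrow> real" and k
    by (rule Ck_on_compose_real[OF \<open>open I\<close> open_UNIV _ that \<theta>]) simp
  then have "Ck_on k I (\<lambda>r. cos (\<theta> r))" and "Ck_on k I (\<lambda>r. sin (\<theta> r))" for k
    using Ck_on_sin_cos by blast+
  then have "Ck_on k I (\<lambda>r. cos (\<theta> r) *\<^sub>R C + sin (\<theta> r) *\<^sub>R S + E)" for k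
    by (intro Ck_on_add Ck_on_const \<open>open I\<close>
        Ck_on_bounded_linear_compose[OF \<open>open I\<close> bounded_linear_scaleR_left])
  then show ?thesis
    using \<open>open I\<close> by (simp add: smooth_on_def decomp)
qed

lemma diffeomorphism_betw_rotz_twist:
  fixes \<alpha> \<theta> :: "real \<Rightarrow> real"
  assumes "open I" and "bij_betw \<alpha> I UNIV" and "smooth_on I \<alpha>" and "smooth_on UNIV (inv_into I \<alpha>)"
    and "smooth_on I \<theta>"
  shows "diffeomorphism_betw (I \<times> S2) (UNIV \<times> S2) (\<lambda>p. (\<alpha> (fst p), rotz (\<theta> (fst p)) (snd p)))"
    (is "diffeomorphism_betw _ _ ?F")
proof -
  let ?\<beta> = "inv_into I \<alpha>"
  let ?G = "\<lambda>q. (?\<beta> (fst q), rotz (- \<theta> (?\<beta> (fst q))) (snd q))"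
  have inj: "inj_on \<alpha> I" and \<beta>_mem: "?\<beta> t \<in> I" and \<alpha>_\<beta>: "\<alpha> (?\<beta> t) = t" for t
    using assms(2) by (auto simp: bij_betw_def intro: inv_into_into f_inv_into_f)
  have inj_F: "inj_on ?F (I \<times> S2)"
  proof (rule inj_onI)
    fix p q
    assume "p \<in> I \<times> S2" "q \<in> I \<times> S2" and eq: "?F p = ?F q"
    then have "fst p = fst q"
      using inj by (auto dest: inj_onD)
    moreover from eq this have "rotz (\<theta> (fst p)) (snd p) = rotz (\<theta> (fst p)) (snd q)"
      by simp
    then have "snd p = snd q"
      by (metis rotz_minus_rotz)
    ultimately show "p = q"
      by (simp add: prod_eq_iff)
  qed
  have G_mem: "?G q \<in> I \<times> S2" if "q \<in> UNIV \<times> S2" for q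
    using that \<beta>_mem by auto
  have F_G: "?F (?G q) = q" for q
    by (simp add: \<alpha>_\<beta> rotz_rotz_minus)
  have "?F ` (I \<times> S2) = UNIV \<times> S2"
    using G_mem F_G by (auto intro!: image_eqI[of _ ?F, OF F_G[symmetric]])
  with inj_F have bij: "bij_betw ?F (I \<times> S2) (UNIV \<times> S2)"
    by (simp add: bij_betw_def)
  have inv: "?G q = inv_into (I \<times> S2) ?F q" if "q \<in> UNIV \<times> S2" for q
    using inv_into_f_eq[OF inj_F G_mem[OF that] F_G] by simp
  have smooth_F: "smooth_on (I \<times> UNIV) (fibre_affine \<alpha> (\<lambda>r. 0) (\<lambda>r. rotz_matrix (\<theta> r)))"
    by (intro smooth_on_fibre_affine smooth_on_rotz_matrix smooth_on_const assms(1,3,5))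
  have "Ck_on k UNIV (\<lambda>t. \<theta> (?\<beta> t))" for k
    by (rule Ck_on_compose_real[OF open_UNIV \<open>open I\<close>])
      (use \<beta>_mem assms(4,5) in \<open>auto simp: smooth_on_def\<close>)
  then have "smooth_on UNIV (\<lambda>t. - \<theta> (?\<beta> t))"
    unfolding smooth_on_def using Ck_on_minus[OF open_UNIV] by blast
  then have smooth_G:
    "smooth_on (UNIV \<times> UNIV) (fibre_affine ?\<beta> (\<lambda>r. 0) (\<lambda>t. rotz_matrix (- \<theta> (?\<beta> t))))"
    by (intro smooth_on_fibre_affine smooth_on_rotz_matrix smooth_on_const assms(4) open_UNIV)
  have "smooth_map_on (I \<times> S2) ?F"
    by (rule smooth_map_onI[OF open_Times[OF \<open>open I\<close> open_UNIV] _ smooth_F])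
      (auto simp: fibre_affine_def rotz_eq_matrix_vector_mult)
  moreover   have "smooth_map_on (UNIV \<times> S2) (inv_into (I \<times> S2) ?F)"
  proof (rule smooth_map_onI[OF open_Times[OF open_UNIV open_UNIV] _ smooth_G])
    show "fibre_affine ?\<beta> (\<lambda>r. 0) (\<lambda>t. rotz_matrix (- \<theta> (?\<beta> t))) q
        = inv_into (I \<times> S2) ?F q"
      if "q \<in> UNIV \<times> S2" for q
      unfolding inv[OF that, symmetric] by (simp add: fibre_affine_def rotz_eq_matrix_vector_mult)
  qed simp
  ultimately show ?thesis
    using bij unfolding diffeomorphism_betw_def by blast
qed

section \<open>One-variable estimates\<close>

lemma interval_integral_has_real_derivative:
  fixes g :: "real \<Rightarrow> real"
  assumes "continuous_on {l<..<u} g" and "r0 \<in> {l<..<u}" and "x \<in> {l<..<u}"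
  shows "((\<lambda>r. LBINT s=ereal r0..ereal r. g s) has_real_derivative g x) (at x)"
proof -
  define a0 where "a0 = (l + min r0 x) / 2"
  define b0 where "b0 = (u + max r0 x) / 2"
  have ab: "l < a0" "a0 < x" "x < b0" "b0 < u" "a0 \<le> r0" "r0 \<le> b0"
    using assms(2,3) by (auto simp: a0_def b0_def)
  have "continuous_on {a0..b0} g"
    by (rule continuous_on_subset[OF assms(1)]) (use ab in auto)
  from interval_integral_FTC2[OF ab(5,6) this, of x] ab
  have "((\<lambda>r. LBINT s=r0..r. g s) has_vector_derivative g x) (at x within {a0..b0})"
    by auto
  then have "((\<lambda>r. LBINT s=r0..r. g s) has_vector_derivative g x) (at x within {a0<..<b0})"
    by (rule has_vector_derivative_within_subset) auto
  then have "((\<lambda>r. LBINT s=r0..r. g s) has_vector_derivative g x) (at x)"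
    using ab by (subst (asm) has_vector_derivative_within_open) auto
  then show ?thesis
    by (simp add: has_real_derivative_iff_has_vector_derivative)
qed

lemma lipschitz_bound_on_interval:
  fixes f f' :: "real \<Rightarrow> real"
  assumes "\<And>x. x \<in> {a..b} \<Longrightarrow> (f has_real_derivative f' x) (at x)" and "continuous_on {a..b} f'"
  obtains C where "C > 0"
    and "\<And>x y. x \<in> {a..b} \<Longrightarrow> y \<in> {a..b} \<Longrightarrow> \<bar>f x - f y\<bar> \<le> C * \<bar>x - y\<bar>"
proof -
  obtain B where B: "\<And>x. x \<in> {a..b} \<Longrightarrow> \<bar>f' x\<bar> \<le> B"
    using compact_imp_bounded[OF compact_continuous_image[OF assms(2) compact_Icc]]
    unfolding bounded_real by fast
  show ?thesis
  proof (rule that[of "\<bar>B\<bar> + 1"])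
    fix x y
    assume "x \<in> {a..b}" "y \<in> {a..b}"
    then have "\<bar>f x - f y\<bar> \<le> B * \<bar>x - y\<bar>"
      using field_differentiable_bound[of "{a..b}" f f' B x y] assms(1) B
      by (auto intro: has_field_derivative_at_within)
    also have "\<dots> \<le> (\<bar>B\<bar> + 1) * \<bar>x - y\<bar>"
      by (intro mult_right_mono) auto
    finally show "\<bar>f x - f y\<bar> \<le> (\<bar>B\<bar> + 1) * \<bar>x - y\<bar>" .
  qed simp
qed

lemma unbounded_above_if_deriv_ge_inverse_distance:
  fixes f f' :: "real \<Rightarrow> real"
  assumes "c < b" and "K > 0"
    and "\<And>x. x \<in> {c..<b} \<Longrightarrow> (f has_real_derivative f' x) (at x)"
    and "\<And>x. x \<in> {c..<b} \<Longrightarrow> K / (b - x) \<le> f' x"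
  shows "\<exists>x\<in>{c..<b}. y \<le> f x"
proof (cases "y \<le> f c")
  case True
  then show ?thesis using \<open>c < b\<close> by auto
next
  case False
  define x where "x = b - (b - c) * exp ((f c - y) / K)"
  have "(f c - y) / K < 0"
    using False \<open>K > 0\<close> by (simp add: divide_neg_pos)
  then have "(b - c) * exp ((f c - y) / K) < b - c"
    using \<open>c < b\<close> by simp
  moreover have "0 < (b - c) * exp ((f c - y) / K)"
    using \<open>c < b\<close> by simp
  ultimately have x: "c < x" "x < b"
    by (auto simp: x_def)
  have ln_x: "ln (b - x) = ln (b - c) + (f c - y) / K"
    using \<open>c < b\<close> by (simp add: x_def ln_mult)
  define h where "h s = f s + K * ln (b - s)" for s
  have "h c \<le> h x"
  proof (rule DERIV_nonneg_imp_increasing_open[OF less_imp_le[OF \<open>c < x\<close>]])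
    fix s assume s: "c < s" "s < x"
    then have "(h has_real_derivative f' s - K / (b - s)) (at s)"
      unfolding h_def using assms(3)[of s] x
      by (auto intro!: derivative_eq_intros simp: field_simps)
    moreover have "K / (b - s) \<le> f' s"
      using assms(4)[of s] s x by auto
    ultimately show "\<exists>d. (h has_real_derivative d) (at s) \<and> 0 \<le> d"
      by auto
  next
    have "continuous_on {c..x} f"
      by (rule DERIV_atLeastAtMost_imp_continuous_on) (use assms(3) x in force)
    moreover have "continuous_on {c..x} (\<lambda>s. K * ln (b - s))"
      using x by (intro continuous_intros) auto
    ultimately show "continuous_on {c..x} h"
      unfolding h_def by (rule continuous_on_add)
  qed
  then show ?thesis
    using x \<open>K > 0\<close> by (auto simp: h_def ln_x field_simps intro!: bexI[of _ x])
qed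

lemma unbounded_below_if_deriv_ge_inverse_distance:
  fixes f f' :: "real \<Rightarrow> real"
  assumes "a < c" and "K > 0"
    and "\<And>x. x \<in> {a<..c} \<Longrightarrow> (f has_real_derivative f' x) (at x)"
    and "\<And>x. x \<in> {a<..c} \<Longrightarrow> K / (x - a) \<le> f' x"
  shows "\<exists>x\<in>{a<..c}. f x \<le> y"
proof -
  have "((\<lambda>s. - f (- s)) has_real_derivative f' (- s)) (at s)" if "s \<in> {- c..<- a}" for s
    using DERIV_minus[OF iffD1[OF DERIV_mirror assms(3)]] that by simp
  moreover have "K / (- a - s) \<le> f' (- s)" if "s \<in> {- c..<- a}" for s
  proof -
    have "K / (- s - a) \<le> f' (- s)"
      using assms(4)[of "- s"] that by simp
    moreover have "- s - a = - a - s"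
      by simp
    ultimately show ?thesis
      by metis
  qed
  ultimately obtain s where "s \<in> {- c..<- a}" and "- y \<le> - f (- s)"
    using unbounded_above_if_deriv_ge_inverse_distance[where c="- c" and b="- a" and K=K
        and f="\<lambda>s. - f (- s)" and f'="\<lambda>s. f' (- s)" and y="- y"] assms(1,2)
    by auto
  then show ?thesis
    by (intro bexI[of _ "- s"]) auto
qed

section \<open>The maps F_+ and F_-\<close>

locale kerr_de_sitter_horizons =
  fixes M a Lam rm rp r0 :: real
  assumes Lam_pos: "Lam > 0" and rm_pos: "0 < rm"
    and DeltaR_rm: "DeltaR M a Lam rm = 0" and DeltaR_rp: "DeltaR M a Lam rp = 0"
    and DeltaR_pos: "\<And>r. r \<in> {rm<..<rp} \<Longrightarrow> DeltaR M a Lam r > 0"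
    and r0_mem: "r0 \<in> {rm<..<rp}"
begin

definition Tfun' :: "real \<Rightarrow> real" where
  "Tfun' r = lam a Lam * (a\<^sup>2 + r\<^sup>2) / DeltaR M a Lam r"

definition Afun' :: "real \<Rightarrow> real" where
  "Afun' r = lam a Lam * a / DeltaR M a Lam r"

lemma lam_pos: "lam a Lam > 0"
  using Lam_pos by (simp add: lam_def add_pos_nonneg)

lemma DeltaR_neq_0: "r \<in> {rm<..<rp} \<Longrightarrow> DeltaR M a Lam r \<noteq> 0"
  using DeltaR_pos by fastforce

lemma Ck_on_DeltaR: "open U \<Longrightarrow> Ck_on k U (DeltaR M a Lam)"
proof -
  assume "open U"
  have "DeltaR M a Lam = (\<lambda>r. (r * r + a * a) * (1 - Lam / 3 * (r * r)) - 2 * M * r)"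
    by (simp add: fun_eq_iff DeltaR_def power2_eq_square algebra_simps)
  then show ?thesis
    by (simp only:) (intro Ck_on_diff Ck_on_mult Ck_on_add Ck_on_ident Ck_on_const \<open>open U\<close>)
qed

lemma smooth_on_Tfun': "smooth_on {rm<..<rp} Tfun'"
proof -
  have "Tfun' = (\<lambda>r. (lam a Lam * (a * a + r * r)) * inverse (DeltaR M a Lam r))"
    by (simp add: fun_eq_iff Tfun'_def power2_eq_square divide_inverse)
  then show ?thesis
    unfolding smooth_on_def
    by (auto intro!: Ck_on_mult Ck_on_add Ck_on_ident Ck_on_const Ck_on_inverse Ck_on_DeltaR DeltaR_neq_0)
qed

lemma smooth_on_Afun': "smooth_on {rm<..<rp} Afun'"
proof -
  have "Afun' = (\<lambda>r. (lam a Lam * a) * inverse (DeltaR M a Lam r))"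
    by (simp add: fun_eq_iff Afun'_def divide_inverse)
  then show ?thesis
    unfolding smooth_on_def
    by (auto intro!: Ck_on_mult Ck_on_const Ck_on_inverse Ck_on_DeltaR DeltaR_neq_0)
qed

lemma Tfun'_pos: "r \<in> {rm<..<rp} \<Longrightarrow> Tfun' r > 0"
proof -
  assume r: "r \<in> {rm<..<rp}"
  then have "a\<^sup>2 + r\<^sup>2 > 0"
    using rm_pos by (intro add_nonneg_pos) auto
  then show ?thesis
    using DeltaR_pos[OF r] lam_pos by (simp add: Tfun'_def)
qed

lemma Tfun_has_real_derivative:
  "r \<in> {rm<..<rp} \<Longrightarrow> (Tfun M a Lam r0 has_real_derivative Tfun' r) (at r)"
proof -
  assume r: "r \<in> {rm<..<rp}"
  have "Tfun M a Lam r0 = (\<lambda>r. LBINT s=ereal r0..ereal r. Tfun' s)"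
    by (simp add: fun_eq_iff Tfun_def Tfun'_def)
  moreover have "continuous_on {rm<..<rp} Tfun'"
    using smooth_on_Tfun' by (rule smooth_on_imp_continuous_on)
  ultimately show ?thesis
    using interval_integral_has_real_derivative[OF _ r0_mem r] by simp
qed

lemma Afun_has_real_derivative:
  "r \<in> {rm<..<rp} \<Longrightarrow> (Afun M a Lam r0 has_real_derivative Afun' r) (at r)"
proof -
  assume r: "r \<in> {rm<..<rp}"
  have "Afun M a Lam r0 = (\<lambda>r. LBINT s=ereal r0..ereal r. Afun' s)"
    by (simp add: fun_eq_iff Afun_def Afun'_def)
  moreover have "continuous_on {rm<..<rp} Afun'"
    using smooth_on_Afun' by (rule smooth_on_imp_continuous_on)
  ultimately show ?thesis
    using interval_integral_has_real_derivative[OF _ r0_mem r] by simp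
qed

lemma strict_mono_on_Tfun: "strict_mono_on {rm<..<rp} (Tfun M a Lam r0)"
proof (rule strict_mono_onI)
  fix r s assume rs: "r \<in> {rm<..<rp}" "s \<in> {rm<..<rp}" "r < s"
  show "Tfun M a Lam r0 r < Tfun M a Lam r0 s"
  proof (rule DERIV_pos_imp_increasing[OF \<open>r < s\<close>])
    fix x assume "r \<le> x" "x \<le> s"
    then have "x \<in> {rm<..<rp}"
      using rs by auto
    then show "\<exists>y. (Tfun M a Lam r0 has_real_derivative y) (at x) \<and> 0 < y"
      using Tfun_has_real_derivative Tfun'_pos by blast
  qed
qed

lemma Tfun'_lower_bound:
  assumes "r \<in> {rm<..<rp}" and "DeltaR M a Lam r \<le> D"
  shows "lam a Lam * rm\<^sup>2 / D \<le> Tfun' r"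
proof -
  have "rm\<^sup>2 \<le> a\<^sup>2 + r\<^sup>2"
    using assms(1) rm_pos by (auto intro!: power_mono add_increasing)
  then have "lam a Lam * rm\<^sup>2 \<le> lam a Lam * (a\<^sup>2 + r\<^sup>2)"
    using lam_pos by simp
  moreover have "0 < DeltaR M a Lam r"
    using DeltaR_pos assms(1) by blast
  ultimately show ?thesis
    unfolding Tfun'_def using assms(2) lam_pos by (intro frac_le) auto
qed

lemma Tfun_surj: "\<exists>r\<in>{rm<..<rp}. Tfun M a Lam r0 r = t"
proof -
  let ?T = "Tfun M a Lam r0"
  have DeltaR_smooth: "smooth_on UNIV (DeltaR M a Lam)"
    by (simp add: smooth_on_def Ck_on_DeltaR)
  let ?D' = "\<lambda>r. vector_derivative (DeltaR M a Lam) (at r)"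
  have D'_deriv: "(DeltaR M a Lam has_real_derivative ?D' r) (at r)" for r
    using smooth_on_vector_derivative(2)[OF DeltaR_smooth]
    by (simp add: has_real_derivative_iff_has_vector_derivative)
  have "continuous_on {rm..rp} ?D'"
    using smooth_on_imp_continuous_on[OF smooth_on_vector_derivative(1)[OF DeltaR_smooth]]
    by (rule continuous_on_subset) simp
  then obtain C where "C > 0"
    and C: "\<And>x y. x \<in> {rm..rp} \<Longrightarrow> y \<in> {rm..rp} \<Longrightarrow>
      \<bar>DeltaR M a Lam x - DeltaR M a Lam y\<bar> \<le> C * \<bar>x - y\<bar>"
    using lipschitz_bound_on_interval[OF D'_deriv] by blast
  define K where "K = lam a Lam * rm\<^sup>2 / C"
  have "K > 0"
    using \<open>C > 0\<close> lam_pos rm_pos by (simp add: K_def)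
  have near_rp: "K / (rp - x) \<le> Tfun' x" if "x \<in> {r0..<rp}" for x
  proof -
    have x: "x \<in> {rm<..<rp}" using that r0_mem by auto
    have "DeltaR M a Lam x \<le> C * (rp - x)"
      using C[of x rp] DeltaR_rp x by auto
    then show ?thesis
      using Tfun'_lower_bound[OF x] by (simp add: K_def)
  qed
  have deriv_rp: "(?T has_real_derivative Tfun' x) (at x)" if "x \<in> {r0..<rp}" for x
    using Tfun_has_real_derivative that r0_mem by simp
  have "r0 < rp"
    using r0_mem by simp
  from unbounded_above_if_deriv_ge_inverse_distance[OF this \<open>K > 0\<close> deriv_rp near_rp, of t]
  obtain x2 where x2: "x2 \<in> {r0..<rp}" "t \<le> ?T x2"
    by blast
  have near_rm: "K / (x - rm) \<le> Tfun' x" if "x \<in> {rm<..r0}" for x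
  proof -
    have x: "x \<in> {rm<..<rp}" using that r0_mem by auto
    have "DeltaR M a Lam x \<le> C * (x - rm)"
      using C[of x rm] DeltaR_rm x by auto
    then show ?thesis
      using Tfun'_lower_bound[OF x] by (simp add: K_def)
  qed
  have deriv_rm: "(?T has_real_derivative Tfun' x) (at x)" if "x \<in> {rm<..r0}" for x
    using Tfun_has_real_derivative that r0_mem by simp
  have "rm < r0"
    using r0_mem by simp
  from unbounded_below_if_deriv_ge_inverse_distance[OF this \<open>K > 0\<close> deriv_rm near_rm, of t]
  obtain x1 where x1: "x1 \<in> {rm<..r0}" "?T x1 \<le> t"
    by blast
  have "continuous_on {x1..x2} ?T"
  proof (rule DERIV_atLeastAtMost_imp_continuous_on)
    fix x assume "x1 \<le> x" "x \<le> x2"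
    then have "x \<in> {rm<..<rp}"
      using x1 x2 by auto
    then show "\<exists>y. (?T has_real_derivative y) (at x)"
      using Tfun_has_real_derivative by blast
  qed
  then obtain r where "x1 \<le> r" "r \<le> x2" "?T r = t"
    using IVT'[of ?T x1 t x2] x1 x2 by auto
  then show ?thesis
    using x1 x2 by (intro bexI[of _ r]) auto
qed

lemma bij_betw_Tfun: "bij_betw (Tfun M a Lam r0) {rm<..<rp} UNIV"
  unfolding bij_betw_def
proof
  show "inj_on (Tfun M a Lam r0) {rm<..<rp}"
    using strict_mono_on_imp_inj_on[OF strict_mono_on_Tfun] .
  have "t \<in> Tfun M a Lam r0 ` {rm<..<rp}" for t
  proof -
    obtain r where "r \<in> {rm<..<rp}" "Tfun M a Lam r0 r = t"
      using Tfun_surj by blast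
    then show ?thesis
      by blast
  qed
  then show "Tfun M a Lam r0 ` {rm<..<rp} = UNIV"
    by blast
qed

lemma diffeomorphism_betw_scaled_twist:
  assumes "\<sigma> \<noteq> 0"
  shows "diffeomorphism_betw (Sigma0 rm rp) Horizon
    (\<lambda>p. (\<sigma> * Tfun M a Lam r0 (fst p), rotz (\<sigma> * Afun M a Lam r0 (fst p)) (snd p)))"
proof -
  let ?I = "{rm<..<rp}" and ?\<alpha> = "\<lambda>r. \<sigma> * Tfun M a Lam r0 r"
  have "bij_betw (\<lambda>t. \<sigma> * t) UNIV UNIV"
    using assms by (intro bij_betwI[where g="\<lambda>t. t / \<sigma>"]) auto
  then have bij: "bij_betw ?\<alpha> ?I UNIV"
    using bij_betw_trans[OF bij_betw_Tfun] by (simp add: o_def)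
  have deriv: "(?\<alpha> has_real_derivative \<sigma> * Tfun' r) (at r)" if "r \<in> ?I" for r
    using DERIV_cmult[OF Tfun_has_real_derivative[OF that]] .
  have smooth_deriv: "smooth_on ?I (\<lambda>r. \<sigma> * Tfun' r)"
    using smooth_on_Tfun' by (auto simp: smooth_on_def intro: Ck_on_mult Ck_on_const)
  have "\<sigma> * Tfun' r \<noteq> 0" if "r \<in> ?I" for r
    using Tfun'_pos[OF that] assms by simp
  then have "smooth_on UNIV (inv_into ?I ?\<alpha>)"
    using bij by (intro smooth_on_inv_into[OF _ _ _ _ deriv _ smooth_deriv]) (auto simp: bij_betw_def)
  moreover have "smooth_on ?I ?\<alpha>"
    by (rule smooth_on_primitive[OF _ deriv smooth_deriv]) auto
  moreover have "smooth_on ?I (\<lambda>r. \<sigma> * Afun M a Lam r0 r)"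
    using smooth_on_Afun' by (intro smooth_on_primitive[OF _ DERIV_cmult[OF Afun_has_real_derivative]])
      (auto simp: smooth_on_def intro: Ck_on_mult Ck_on_const)
  ultimately show ?thesis
    unfolding Sigma0_def Horizon_def
    using diffeomorphism_betw_rotz_twist[OF open_greaterThanLessThan bij] by simp
qed

end

theorem mainTheorem15:
  fixes M a Lam rm rp r0 :: real
  assumes "Lam > 0" and "M > 0"
    and "0 < rm" and "rm < rp"
    and "DeltaR M a Lam rm = 0" and "DeltaR M a Lam rp = 0"
    and "\<forall>r\<in>{rm<..<rp}. DeltaR M a Lam r > 0"
    and "r0 \<in> {rm<..<rp}"
  shows "diffeomorphism_betw (Sigma0 rm rp) Horizon (Fplus M a Lam r0)
       \<and> diffeomorphism_betw (Sigma0 rm rp) Horizon (Fminus M a Lam r0)"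
proof -
  interpret kerr_de_sitter_horizons M a Lam rm rp r0
    using assms by unfold_locales auto
  have "Fplus M a Lam r0
      = (\<lambda>p. (- 1 * Tfun M a Lam r0 (fst p), rotz (- 1 * Afun M a Lam r0 (fst p)) (snd p)))"
    and "Fminus M a Lam r0
      = (\<lambda>p. (1 * Tfun M a Lam r0 (fst p), rotz (1 * Afun M a Lam r0 (fst p)) (snd p)))"
    by (simp_all add: fun_eq_iff Fplus_def Fminus_def)
  then show ?thesis
    using diffeomorphism_betw_scaled_twist[of "- 1"] diffeomorphism_betw_scaled_twist[of 1]
    by simp
qed

end
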